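(* Let $u$ be a (sufficiently smooth and decaying) solution of $i\phi\partial_tu-Hu=0$, let $L=\frac14\mathcal R_h+m^2-\Delta_h$, let $\psi$ be a real-valued function of the space variable, and set $$\Theta(t)=\langle\psi\,\phi\partial_tu,\phi\partial_tu\rangle_h+\mathrm{Re}\,\langle(2\psi L-L\psi)u,u\rangle_h .$$ Then $$\phi\partial_t\Theta=\mathrm{Re}\,\langle[L,\psi]u,\phi\partial_tu\rangle_h,\qquad(\phi\partial_t)^2\Theta=-\tfrac12\langle[L,[L,\psi]]u,u\rangle_h .$$
   Context: Setting: $h$ a Riemannian metric on a 3-dimensional domain $D(h)$, $\phi(t)>0$, space-time metric $g_{00}=\phi^{-2}$, $g_{0i}=0$, $g_{ij}=-h_{ij}$, assumed complete. $\langle f,g\rangle_h=\int_{D(h)}\bar f g\sqrt{\det h}\,dx$. $\Delta_h$ is the Laplace–Beltrami operator, $\mathcal R_h$ the scalar curvature of $h$; $\psi$ and $L\psi$ etc. denote compositions of operators (multiplication by $\psi$). $H=-\gamma^0(i\gamma^af_a^jD_j+m)$, $m\ge0$, where $\gamma^0=\mathrm{diag}(1,1,-1,-1)$, $\gamma^k=\gamma^0\begin{pmatrix}0&\sigma_k\\ \sigma_k&0\end{pmatrix}$ ($\sigma_k$ Pauli), $\gamma_a=\eta_{ab}\gamma^b$ with $\eta=\mathrm{diag}(1,-1,-1,-1)$, $f_a^i$ a dreibein ($h^{ij}=\sum_af_a^if_a^j$), $D_j=\partial_j+\frac18\alpha_j^{ab}[\gamma_a,\gamma_b]$ with $\alpha_i^{ab}=f^a_j\partial_if^{jb}+f^a_j\Lambda^j_{ik}f^{kb}$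 and $\Lambda$ the Christoffel symbols of $h$. One has $H^2=L$, and $L$ is self-adjoint for $\langle\cdot,\cdot\rangle_h$. *)

theory Defs
  imports "HOL-Analysis.Analysis"
begin

text \<open>Spinor fields on the spatial domain: functions from R^3 (coordinates) to C^4.
  Only values on the domain D matter; operators are required to be local on D.\<close>

type_synonym sfield = "real^3 \<Rightarrow> complex^4"

definition cscale :: "complex \<Rightarrow> complex^4 \<Rightarrow> complex^4" where
  "cscale c w = (\<chi> k. c * w $ k)"

definition fadd :: "sfield \<Rightarrow> sfield \<Rightarrow> sfield" where
  "fadd f g = (\<lambda>x. f x + g x)"

definition fsmul :: "complex \<Rightarrow> sfield \<Rightarrow> sfield" where
  "fsmul c f = (\<lambda>x. cscale c (f x))"

definition fmul :: "(real^3 \<Rightarrow> real) \<Rightarrow> sfield \<Rightarrow> sfield" where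
  "fmul \<psi> f = (\<lambda>x. cscale (complex_of_real (\<psi> x)) (f x))"

definition comm :: "(sfield \<Rightarrow> sfield) \<Rightarrow> (sfield \<Rightarrow> sfield) \<Rightarrow> sfield \<Rightarrow> sfield" where
  "comm A B f = fadd (A (B f)) (fsmul (-1) (B (A f)))"

definition hinner :: "(real^3) set \<Rightarrow> (real^3 \<Rightarrow> real^3^3) \<Rightarrow> sfield \<Rightarrow> sfield \<Rightarrow> complex" where
  "hinner D h f g =
     (LINT x:D|lborel. (\<Sum>k\<in>UNIV. cnj (f x $ k) * g x $ k) * complex_of_real (sqrt (det (h x))))"

definition wL2 :: "(real^3) set \<Rightarrow> (real^3 \<Rightarrow> real^3^3) \<Rightarrow> sfield \<Rightarrow> bool" where
  "wL2 D h f \<longleftrightarrow> set_borel_measurable lborel D f \<and>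
     set_integrable lborel D (\<lambda>x. (norm (f x))\<^sup>2 * sqrt (det (h x)))"

definition tderiv_on :: "(real^3) set \<Rightarrow> (real \<Rightarrow> sfield) \<Rightarrow> (real \<Rightarrow> sfield) \<Rightarrow> bool" where
  "tderiv_on D a a' \<longleftrightarrow> (\<forall>t. \<forall>x\<in>D. ((\<lambda>s. a s x) has_vector_derivative a' t x) (at t))"

text \<open>A "sufficiently smooth and decaying" curve of fields: pointwise time-differentiable
  on D, measurable, and locally uniformly in time dominated (together with its time
  derivative) by a fixed weighted-square-integrable function.\<close>
definition decay_curve :: "(real^3) set \<Rightarrow> (real^3 \<Rightarrow> real^3^3) \<Rightarrow> (real \<Rightarrow> sfield) \<Rightarrow> (real \<Rightarrow> sfield) \<Rightarrow> bool" where
  "decay_curve D h a a' \<longleftrightarrow> tderiv_on D a a' \<and>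
     (\<forall>t. set_borel_measurable lborel D (a t) \<and> set_borel_measurable lborel D (a' t)) \<and>
     (\<forall>T>0. \<exists>G. set_borel_measurable lborel D G \<and>
        set_integrable lborel D (\<lambda>x. (G x)\<^sup>2 * sqrt (det (h x))) \<and>
        (\<forall>t\<in>{-T..T}. \<forall>x\<in>D. norm (a t x) \<le> G x \<and> norm (a' t x) \<le> G x))"

definition local_on :: "(real^3) set \<Rightarrow> (sfield \<Rightarrow> sfield) \<Rightarrow> bool" where
  "local_on D A \<longleftrightarrow> (\<forall>f g. (\<forall>x\<in>D. f x = g x) \<longrightarrow> (\<forall>x\<in>D. A f x = A g x))"

end

theory Submission
  imports Defs
begin

(*
  Every term of \<Theta> is a pairing \<langle>a(t), b(t)\<rangle>_h of curves that are dominated, locally uniformly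
  in t, by a weighted square-integrable function, so it may be differentiated under the integral
  sign (dominated convergence applied to difference quotients). Differentiating
  i \<phi> \<partial>\<^sub>t u = H u in time and applying H once more, H\<^sup>2 = L gives
  \<phi>\<^sup>2 \<partial>\<^sub>t\<^sup>2 u = - L u - \<phi> \<phi>' \<partial>\<^sub>t u on D. Substituting this, the symmetry of L and of multiplication
  by \<psi> makes everything cancel except the commutator pairing; one more differentiation and the
  same substitution leave the double commutator.
*)

lemma has_field_derivative_lebesgue_integral:
  fixes f f' :: "real \<Rightarrow> 'a \<Rightarrow> real"
  assumes f_int: "\<And>s. integrable M (f s)"
    and f'_meas: "f' t \<in> borel_measurable M"
    and f_deriv: "\<And>s x. x \<in> space M \<Longrightarrow> ((\<lambda>s. f s x) has_field_derivative f' s x) (at s)"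
    and g_int: "integrable M g"
    and f'_bound: "\<And>s x. s \<in> {t-1..t+1} \<Longrightarrow> x \<in> space M \<Longrightarrow> \<bar>f' s x\<bar> \<le> g x"
  shows "((\<lambda>s. LINT x|M. f s x) has_field_derivative (LINT x|M. f' t x)) (at t)"
  unfolding has_field_derivative_iff tendsto_at_iff_sequentially
proof (intro allI impI)
  fix X :: "nat \<Rightarrow> real"
  assume X: "\<forall>n. X n \<in> UNIV - {t}" "X \<longlonglongrightarrow> t"
  obtain N where N: "\<And>n. n \<ge> N \<Longrightarrow> dist (X n) t < 1"
    using metric_LIMSEQ_D[OF X(2), of 1] by auto
  define Q where "Q n x = (f (X (n + N)) x - f t x) / (X (n + N) - t)" for n x
  have near: "X (n + N) \<in> {t-1..t+1}" for n
    using N[of "n + N"] by (auto simp: dist_real_def)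
  have lim: "(\<lambda>n. LINT x|M. Q n x) \<longlonglongrightarrow> (LINT x|M. f' t x)"
  proof (rule integral_dominated_convergence[where w = g])
    show "(\<lambda>x. Q n x) \<in> borel_measurable M" for n
      unfolding Q_def using f_int by (intro borel_measurable_divide borel_measurable_diff) auto
    show "AE x in M. (\<lambda>n. Q n x) \<longlonglongrightarrow> f' t x"
    proof (rule AE_I2)
      fix x assume x: "x \<in> space M"
      have "((\<lambda>y. (f y x - f t x) / (y - t)) \<longlongrightarrow> f' t x) (at t)"
        using f_deriv[OF x] unfolding has_field_derivative_iff by simp
      then have "(\<lambda>n. (f (Y n) x - f t x) / (Y n - t)) \<longlonglongrightarrow> f' t x"
        if "\<forall>n. Y n \<in> UNIV - {t}" "Y \<longlonglongrightarrow> t" for Y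
        using that unfolding tendsto_at_iff_sequentially comp_def by simp
      then show "(\<lambda>n. Q n x) \<longlonglongrightarrow> f' t x"
        unfolding Q_def using X by (auto intro: LIMSEQ_ignore_initial_segment)
    qed
    show "AE x in M. norm (Q n x) \<le> g x" for n
    proof (rule AE_I2)
      fix x assume x: "x \<in> space M"
      have "norm (f (X (n + N)) x - f t x) \<le> g x * norm (X (n + N) - t)"
        by (rule field_differentiable_bound[where S = "{t-1..t+1}" and f' = "\<lambda>s. f' s x"])
          (use f_deriv[OF x] f'_bound[OF _ x] near in \<open>auto intro: has_field_derivative_at_within\<close>)
      moreover have "X (n + N) \<noteq> t" using X(1) by auto
      ultimately show "norm (Q n x) \<le> g x"
        unfolding Q_def by (simp add: abs_divide divide_le_eq)
    qed
  qed (use f'_meas g_int in auto)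
  have quotient_eq: "(LINT x|M. Q n x) = ((LINT x|M. f (X (n + N)) x) - (LINT x|M. f t x)) / (X (n + N) - t)" for n
    unfolding Q_def using f_int by simp
  show "((\<lambda>y. ((LINT x|M. f y x) - (LINT x|M. f t x)) / (y - t)) \<circ> X) \<longlonglongrightarrow> (LINT x|M. f' t x)"
    by (rule LIMSEQ_offset[where k = N]) (use lim in \<open>simp add: quotient_eq comp_def\<close>)
qed

definition spinor_inner :: "complex^4 \<Rightarrow> complex^4 \<Rightarrow> complex" where
  "spinor_inner a b = (\<Sum>k\<in>UNIV. cnj (a $ k) * b $ k)"

lemma spinor_inner_cscale_left [simp]: "spinor_inner (cscale c a) b = cnj c * spinor_inner a b"
  by (simp add: spinor_inner_def cscale_def sum_distrib_left mult.assoc)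

lemma spinor_inner_cscale_right [simp]: "spinor_inner a (cscale c b) = c * spinor_inner a b"
  by (simp add: spinor_inner_def cscale_def sum_distrib_left mult.left_commute)

lemma spinor_inner_add_left [simp]: "spinor_inner (a + b) c = spinor_inner a c + spinor_inner b c"
  by (simp add: spinor_inner_def sum.distrib distrib_right)

lemma spinor_inner_add_right [simp]: "spinor_inner a (b + c) = spinor_inner a b + spinor_inner a c"
  by (simp add: spinor_inner_def sum.distrib distrib_left)

lemma cnj_spinor_inner [simp]: "cnj (spinor_inner a b) = spinor_inner b a"
  by (simp add: spinor_inner_def mult.commute)

lemma norm_spinor_inner_le: "norm (spinor_inner a b) \<le> norm a * norm b"
proof -
  have "norm (spinor_inner a b) \<le> (\<Sum>k\<in>UNIV. norm (a $ k) * norm (b $ k))"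
    unfolding spinor_inner_def by (rule norm_sum[THEN order_trans]) (simp add: norm_mult)
  also have "\<dots> \<le> L2_set (\<lambda>k. norm (a $ k)) UNIV * L2_set (\<lambda>k. norm (b $ k)) UNIV"
    using L2_set_mult_ineq[of "\<lambda>k. norm (a $ k)" "\<lambda>k. norm (b $ k)" UNIV] by simp
  finally show ?thesis by (simp add: norm_vec_def)
qed

lemma borel_measurable_spinor_inner:
  assumes "f \<in> borel_measurable M" "g \<in> borel_measurable M"
  shows "(\<lambda>x. spinor_inner (f x) (g x)) \<in> borel_measurable M"
proof -
  have "(\<lambda>x. cnj (f x $ k)) \<in> borel_measurable M" "(\<lambda>x. g x $ k) \<in> borel_measurable M" for k
    by (rule measurable_compose[OF assms(1)] measurable_compose[OF assms(2)],
        rule borel_measurable_continuous_onI, intro continuous_intros)+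
  then show ?thesis
    unfolding spinor_inner_def by (intro borel_measurable_sum borel_measurable_times)
qed

lemma has_vector_derivative_spinor_inner:
  assumes "(a has_vector_derivative a') (at s)" "(b has_vector_derivative b') (at s)"
  shows "((\<lambda>s. spinor_inner (a s) (b s)) has_vector_derivative
           spinor_inner (a s) b' + spinor_inner a' (b s)) (at s)"
proof -
  have "((\<lambda>s. a s $ k) has_vector_derivative a' $ k) (at s)"
       "((\<lambda>s. b s $ k) has_vector_derivative b' $ k) (at s)" for k
    using assms by (auto intro: bounded_linear.has_vector_derivative[OF bounded_linear_vec_nth])
  then have "((\<lambda>s. spinor_inner (a s) (b s)) has_vector_derivative
      (\<Sum>k\<in>UNIV. cnj (a s $ k) * b' $ k + cnj (a' $ k) * b s $ k)) (at s)"
    unfolding spinor_inner_def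
    by (intro has_vector_derivative_sum has_vector_derivative_mult has_vector_derivative_cnj)
  then show ?thesis by (simp add: spinor_inner_def sum.distrib)
qed

definition hinner_density :: "(real^3) set \<Rightarrow> (real^3 \<Rightarrow> real^3^3) \<Rightarrow> sfield \<Rightarrow> sfield \<Rightarrow> real^3 \<Rightarrow> complex" where
  "hinner_density D h f g x = indicator D x *\<^sub>R (spinor_inner (f x) (g x) * complex_of_real (sqrt (det (h x))))"

lemma hinner_eq_integral_density: "hinner D h f g = integral\<^sup>L lborel (hinner_density D h f g)"
  unfolding hinner_def set_lebesgue_integral_def
  by (intro arg_cong[where f = "integral\<^sup>L lborel"] ext) (simp add: hinner_density_def spinor_inner_def)

lemma set_borel_measurable_sqrt_det:
  assumes "open D" "continuous_on D h"
  shows "set_borel_measurable lborel D (\<lambda>x. sqrt (det (h x)))"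
proof -
  have "continuous_on D (\<lambda>x. sqrt (det (h x)))"
    unfolding det_def using assms(2) by (intro continuous_intros) auto
  then have "(\<lambda>x. indicator D x *\<^sub>R sqrt (det (h x))) \<in> borel_measurable borel"
    using assms(1) by (intro borel_measurable_continuous_on_indicator) auto
  then show ?thesis
    unfolding set_borel_measurable_def by simp
qed

lemma norm_hinner_density_le:
  assumes "x \<in> D \<Longrightarrow> norm (f x) \<le> F x" "x \<in> D \<Longrightarrow> norm (g x) \<le> G x"
  shows "norm (hinner_density D h f g x)
    \<le> norm (indicator D x *\<^sub>R ((F x)\<^sup>2 * sqrt (det (h x)))) + norm (indicator D x *\<^sub>R ((G x)\<^sup>2 * sqrt (det (h x))))"
proof (cases "x \<in> D")
  case True
  with assms have fg: "norm (f x) \<le> F x" "norm (g x) \<le> G x" by auto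
  then have F_G_nonneg: "0 \<le> F x" "0 \<le> G x"
    using norm_ge_zero order_trans by blast+
  have "norm (spinor_inner (f x) (g x)) \<le> F x * G x"
    using norm_spinor_inner_le[of "f x" "g x"] fg by (meson mult_mono norm_ge_zero order_trans)
  also have "\<dots> \<le> (F x)\<^sup>2 + (G x)\<^sup>2"
    using sum_squares_bound[of "F x" "G x"] F_G_nonneg mult_nonneg_nonneg[of "F x" "G x"] by linarith
  finally have bound: "norm (spinor_inner (f x) (g x)) \<le> (F x)\<^sup>2 + (G x)\<^sup>2" .
  have "norm (hinner_density D h f g x) = norm (spinor_inner (f x) (g x)) * \<bar>sqrt (det (h x))\<bar>"
    using True by (simp add: hinner_density_def norm_mult)
  also have "\<dots> \<le> ((F x)\<^sup>2 + (G x)\<^sup>2) * \<bar>sqrt (det (h x))\<bar>"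
    by (rule mult_right_mono[OF bound]) simp
  also have "\<dots> = norm (indicator D x *\<^sub>R ((F x)\<^sup>2 * sqrt (det (h x))))
      + norm (indicator D x *\<^sub>R ((G x)\<^sup>2 * sqrt (det (h x))))"
    using True by (simp add: abs_mult distrib_right)
  finally show ?thesis .
qed (simp add: hinner_density_def)

lemma integrable_hinner_density:
  assumes sqrt_det: "set_borel_measurable lborel D (\<lambda>x. sqrt (det (h x)))"
    and f: "set_borel_measurable lborel D f" "set_integrable lborel D (\<lambda>x. (F x)\<^sup>2 * sqrt (det (h x)))"
      "\<forall>x\<in>D. norm (f x) \<le> F x"
    and g: "set_borel_measurable lborel D g" "set_integrable lborel D (\<lambda>x. (G x)\<^sup>2 * sqrt (det (h x)))"
      "\<forall>x\<in>D. norm (g x) \<le> G x"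
  shows "integrable lborel (hinner_density D h f g)"
proof (rule Bochner_Integration.integrable_bound)
  have "hinner_density D h f g = (\<lambda>x. spinor_inner (indicator D x *\<^sub>R f x) (indicator D x *\<^sub>R g x)
      * complex_of_real (indicator D x *\<^sub>R sqrt (det (h x))))"
    by (auto simp: hinner_density_def indicator_def spinor_inner_def)
  also have "\<dots> \<in> borel_measurable lborel"
    using sqrt_det f(1) g(1) unfolding set_borel_measurable_def
    by (intro borel_measurable_times borel_measurable_spinor_inner measurable_compose[OF _ borel_measurable_of_real])
  finally show "hinner_density D h f g \<in> borel_measurable lborel" .
  show "AE x in lborel. norm (hinner_density D h f g x)
      \<le> norm (norm (indicator D x *\<^sub>R ((F x)\<^sup>2 * sqrt (det (h x)))) + norm (indicator D x *\<^sub>R ((G x)\<^sup>2 * sqrt (det (h x)))))"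
  proof (rule AE_I2)
    fix x
    show "norm (hinner_density D h f g x)
      \<le> norm (norm (indicator D x *\<^sub>R ((F x)\<^sup>2 * sqrt (det (h x)))) + norm (indicator D x *\<^sub>R ((G x)\<^sup>2 * sqrt (det (h x)))))"
      using norm_hinner_density_le[of x D f F g G h] f(3) g(3) by auto
  qed
qed (use f(2) g(2) in \<open>auto simp: set_integrable_def\<close>)

lemma hinner_cong:
  assumes "\<forall>x\<in>D. f x = f' x" "\<forall>x\<in>D. g x = g' x"
  shows "hinner D h f g = hinner D h f' g'"
proof -
  have "hinner_density D h f g = hinner_density D h f' g'"
    using assms by (intro ext) (auto simp: hinner_density_def indicator_def)
  then show ?thesis unfolding hinner_eq_integral_density by simp
qed

lemma hinner_commute: "hinner D h g f = cnj (hinner D h f g)"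
proof -
  have "hinner_density D h g f = (\<lambda>x. cnj (hinner_density D h f g x))"
    by (auto simp: hinner_density_def)
  then show ?thesis unfolding hinner_eq_integral_density by simp
qed

lemma hinner_fsmul_left: "hinner D h (fsmul c f) g = cnj c * hinner D h f g"
proof -
  have "hinner_density D h (fsmul c f) g = (\<lambda>x. cnj c * hinner_density D h f g x)"
    by (auto simp: hinner_density_def fsmul_def)
  then show ?thesis unfolding hinner_eq_integral_density by simp
qed

lemma hinner_fsmul_right: "hinner D h f (fsmul c g) = c * hinner D h f g"
proof -
  have "hinner_density D h f (fsmul c g) = (\<lambda>x. c * hinner_density D h f g x)"
    by (auto simp: hinner_density_def fsmul_def)
  then show ?thesis unfolding hinner_eq_integral_density by simp
qed

lemma hinner_fmul: "hinner D h (fmul \<psi> f) g = hinner D h f (fmul \<psi> g)"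
proof -
  have "hinner_density D h (fmul \<psi> f) g = hinner_density D h f (fmul \<psi> g)"
    by (auto simp: hinner_density_def fmul_def)
  then show ?thesis unfolding hinner_eq_integral_density by simp
qed

lemma hinner_fadd_left:
  assumes "integrable lborel (hinner_density D h f k)" "integrable lborel (hinner_density D h g k)"
  shows "hinner D h (fadd f g) k = hinner D h f k + hinner D h g k"
proof -
  have "hinner_density D h (fadd f g) k = (\<lambda>x. hinner_density D h f k x + hinner_density D h g k x)"
    by (auto simp: hinner_density_def fadd_def algebra_simps)
  then show ?thesis unfolding hinner_eq_integral_density using assms by simp
qed

lemma hinner_fadd_right:
  assumes "integrable lborel (hinner_density D h k f)" "integrable lborel (hinner_density D h k g)"
  shows "hinner D h k (fadd f g) = hinner D h k f + hinner D h k g"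
proof -
  have "hinner_density D h k (fadd f g) = (\<lambda>x. hinner_density D h k f x + hinner_density D h k g x)"
    by (auto simp: hinner_density_def fadd_def algebra_simps)
  then show ?thesis unfolding hinner_eq_integral_density using assms by simp
qed

lemma decay_curve_bound:
  assumes "decay_curve D h a a'"
  obtains G where "set_integrable lborel D (\<lambda>x. (G x)\<^sup>2 * sqrt (det (h x)))"
    "\<And>s x. s \<in> {t-1..t+1} \<Longrightarrow> x \<in> D \<Longrightarrow> norm (a s x) \<le> G x \<and> norm (a' s x) \<le> G x"
proof -
  have "\<forall>T>0. \<exists>G. set_borel_measurable lborel D G \<and>
      set_integrable lborel D (\<lambda>x. (G x)\<^sup>2 * sqrt (det (h x))) \<and>
      (\<forall>s\<in>{-T..T}. \<forall>x\<in>D. norm (a s x) \<le> G x \<and> norm (a' s x) \<le> G x)"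
    using assms unfolding decay_curve_def by blast
  moreover have "(0::real) < \<bar>t\<bar> + 1" by simp
  ultimately obtain G where "set_integrable lborel D (\<lambda>x. (G x)\<^sup>2 * sqrt (det (h x)))"
      "\<forall>s\<in>{-(\<bar>t\<bar>+1)..\<bar>t\<bar>+1}. \<forall>x\<in>D. norm (a s x) \<le> G x \<and> norm (a' s x) \<le> G x"
    by blast
  moreover have "{t-1..t+1} \<subseteq> {-(\<bar>t\<bar>+1)..\<bar>t\<bar>+1}" by auto
  ultimately show ?thesis using that by blast
qed

lemma integrable_hinner_density_decay_curves:
  assumes sqrt_det: "set_borel_measurable lborel D (\<lambda>x. sqrt (det (h x)))"
    and a: "decay_curve D h a a'" and b: "decay_curve D h b b'"
  shows "integrable lborel (hinner_density D h (a s) (b s))"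
    and "integrable lborel (hinner_density D h (a s) (b' s))"
    and "integrable lborel (hinner_density D h (a' s) (b s))"
proof -
  have s: "s \<in> {s-1..s+1}" by simp
  obtain Ga where Ga: "set_integrable lborel D (\<lambda>x. (Ga x)\<^sup>2 * sqrt (det (h x)))"
    "\<And>s' x. s' \<in> {s-1..s+1} \<Longrightarrow> x \<in> D \<Longrightarrow> norm (a s' x) \<le> Ga x \<and> norm (a' s' x) \<le> Ga x"
    using decay_curve_bound[OF a, of s] by blast
  obtain Gb where Gb: "set_integrable lborel D (\<lambda>x. (Gb x)\<^sup>2 * sqrt (det (h x)))"
    "\<And>s' x. s' \<in> {s-1..s+1} \<Longrightarrow> x \<in> D \<Longrightarrow> norm (b s' x) \<le> Gb x \<and> norm (b' s' x) \<le> Gb x"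
    using decay_curve_bound[OF b, of s] by blast
  have "set_borel_measurable lborel D (a s)" "set_borel_measurable lborel D (a' s)"
       "set_borel_measurable lborel D (b s)" "set_borel_measurable lborel D (b' s)"
    using a b unfolding decay_curve_def by auto
  then have "integrable lborel (hinner_density D h f g)" if "f \<in> {a s, a' s}" "g \<in> {b s, b' s}" for f g
    using that Ga Gb s by (intro integrable_hinner_density[OF sqrt_det, of f Ga g Gb]) auto
  then show "integrable lborel (hinner_density D h (a s) (b s))"
    and "integrable lborel (hinner_density D h (a s) (b' s))"
    and "integrable lborel (hinner_density D h (a' s) (b s))"
    by auto
qed

lemma has_field_derivative_Re_hinner_density:
  assumes "tderiv_on D a a'" "tderiv_on D b b'"
  shows "((\<lambda>s. Re (hinner_density D h (a s) (b s) x)) has_field_derivative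
      Re (hinner_density D h (a s) (b' s) x) + Re (hinner_density D h (a' s) (b s) x)) (at s)"
proof (cases "x \<in> D")
  case True
  then have "((\<lambda>s. spinor_inner (a s x) (b s x) * complex_of_real (sqrt (det (h x)))) has_vector_derivative
      (spinor_inner (a s x) (b' s x) + spinor_inner (a' s x) (b s x)) * complex_of_real (sqrt (det (h x)))) (at s)"
    using assms unfolding tderiv_on_def
    by (intro has_vector_derivative_mult_left has_vector_derivative_spinor_inner) auto
  then have "((\<lambda>s. Re (spinor_inner (a s x) (b s x) * complex_of_real (sqrt (det (h x))))) has_field_derivative
      Re ((spinor_inner (a s x) (b' s x) + spinor_inner (a' s x) (b s x)) * complex_of_real (sqrt (det (h x))))) (at s)"
    unfolding has_vector_derivative_complex_iff by blast
  then show ?thesis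
    using True by (simp add: hinner_density_def algebra_simps)
qed (simp add: hinner_density_def)

lemma has_real_derivative_Re_hinner:
  assumes sqrt_det: "set_borel_measurable lborel D (\<lambda>x. sqrt (det (h x)))"
    and a: "decay_curve D h a a'" and b: "decay_curve D h b b'"
  shows "((\<lambda>s. Re (hinner D h (a s) (b s))) has_real_derivative
     Re (hinner D h (a' t) (b t)) + Re (hinner D h (a t) (b' t))) (at t)"
proof -
  define f where "f s x = Re (hinner_density D h (a s) (b s) x)" for s x
  define f' where "f' s x = Re (hinner_density D h (a s) (b' s) x) + Re (hinner_density D h (a' s) (b s) x)" for s x
  note int = integrable_hinner_density_decay_curves[OF sqrt_det a b]
  obtain Ga where Ga: "set_integrable lborel D (\<lambda>x. (Ga x)\<^sup>2 * sqrt (det (h x)))"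
    "\<And>s x. s \<in> {t-1..t+1} \<Longrightarrow> x \<in> D \<Longrightarrow> norm (a s x) \<le> Ga x \<and> norm (a' s x) \<le> Ga x"
    using decay_curve_bound[OF a] by blast
  obtain Gb where Gb: "set_integrable lborel D (\<lambda>x. (Gb x)\<^sup>2 * sqrt (det (h x)))"
    "\<And>s x. s \<in> {t-1..t+1} \<Longrightarrow> x \<in> D \<Longrightarrow> norm (b s x) \<le> Gb x \<and> norm (b' s x) \<le> Gb x"
    using decay_curve_bound[OF b] by blast
  define g where "g x = 2 * (norm (indicator D x *\<^sub>R ((Ga x)\<^sup>2 * sqrt (det (h x))))
      + norm (indicator D x *\<^sub>R ((Gb x)\<^sup>2 * sqrt (det (h x)))))" for x
  have "((\<lambda>s. LINT x|lborel. f s x) has_field_derivative (LINT x|lborel. f' t x)) (at t)"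
  proof (rule has_field_derivative_lebesgue_integral[where g = g])
    show "integrable lborel (f s)" for s
      unfolding f_def using int by auto
    show "f' t \<in> borel_measurable lborel"
      unfolding f'_def using int by (intro borel_measurable_add borel_measurable_Re) auto
    show "integrable lborel g"
      unfolding g_def using Ga(1) Gb(1) unfolding set_integrable_def
      by (intro integrable_mult_right Bochner_Integration.integrable_add integrable_norm)
    show "\<bar>f' s x\<bar> \<le> g x" if "s \<in> {t-1..t+1}" for s x
    proof -
      have "\<bar>f' s x\<bar> \<le> norm (hinner_density D h (a s) (b' s) x) + norm (hinner_density D h (a' s) (b s) x)"
        unfolding f'_def by (meson abs_Re_le_cmod abs_triangle_ineq order_trans add_mono)
      also have "\<dots> \<le> g x"
        using norm_hinner_density_le[of x D "a s" Ga "b' s" Gb h]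
          norm_hinner_density_le[of x D "a' s" Ga "b s" Gb h] Ga(2) Gb(2) that
        unfolding g_def by auto
      finally show ?thesis .
    qed
    show "((\<lambda>s. f s x) has_field_derivative f' s x) (at s)" for s x
      unfolding f_def f'_def using a b unfolding decay_curve_def
      by (intro has_field_derivative_Re_hinner_density) auto
  qed
  moreover have "Re (hinner D h (a s) (b s)) = (LINT x|lborel. f s x)" for s
    unfolding hinner_eq_integral_density f_def using int by simp
  moreover have "Re (hinner D h (a' t) (b t)) + Re (hinner D h (a t) (b' t)) = (LINT x|lborel. f' t x)"
    unfolding hinner_eq_integral_density f'_def using int by simp
  ultimately show ?thesis by simp
qed

locale dirac_evolution =
  fixes D :: "(real^3) set"
    and h :: "real^3 \<Rightarrow> real^3^3"
    and \<phi> \<phi>' :: "real \<Rightarrow> real"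
    and H L :: "sfield \<Rightarrow> sfield"
    and dom :: "sfield set"
    and \<psi> :: "real^3 \<Rightarrow> real"
    and u ut utt :: "real \<Rightarrow> sfield"
  assumes D_open: "open D"
    and h_cont: "continuous_on D h"
    and \<phi>_pos: "\<forall>t. \<phi> t > 0"
    and \<phi>_deriv: "\<forall>t. (\<phi> has_real_derivative \<phi>' t) (at t)"
    and dom_L2: "\<forall>f\<in>dom. wL2 D h f"
    and dom_add: "\<forall>f\<in>dom. \<forall>g\<in>dom. fadd f g \<in> dom"
    and dom_smul: "\<forall>c. \<forall>f\<in>dom. fsmul c f \<in> dom"
    and dom_L: "\<forall>f\<in>dom. L f \<in> dom"
    and dom_\<psi>: "\<forall>f\<in>dom. fmul \<psi> f \<in> dom"
    and H_local: "local_on D H"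
    and H_smul: "\<forall>c. \<forall>f\<in>dom. \<forall>x\<in>D. H (fsmul c f) x = fsmul c (H f) x"
    and H_sq: "\<forall>f\<in>dom. \<forall>x\<in>D. H (H f) x = L f x"
    and L_symm: "\<forall>f\<in>dom. \<forall>g\<in>dom. hinner D h (L f) g = hinner D h f (L g)"
    and u_dom: "\<forall>t. u t \<in> dom \<and> ut t \<in> dom"
    and u_eq: "\<forall>t. \<forall>x\<in>D. cscale \<i> (\<phi> t *\<^sub>R ut t x) = H (u t) x"
    and u_dec: "decay_curve D h u ut"
    and ut_dec: "decay_curve D h ut utt"
    and \<psi>ut_dec: "decay_curve D h (\<lambda>t. fmul \<psi> (ut t)) (\<lambda>t. fmul \<psi> (utt t))"
    and \<psi>Lu_dec: "decay_curve D h (\<lambda>t. fmul \<psi> (L (u t))) (\<lambda>t. fmul \<psi> (L (ut t)))"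
    and L\<psi>u_dec: "decay_curve D h (\<lambda>t. L (fmul \<psi> (u t))) (\<lambda>t. L (fmul \<psi> (ut t)))"
    and Hu_deriv: "tderiv_on D (\<lambda>t. H (u t)) (\<lambda>t. H (ut t))"
begin

abbreviation pairing :: "sfield \<Rightarrow> sfield \<Rightarrow> complex" ("\<langle>_, _\<rangle>") where
  "\<langle>f, g\<rangle> \<equiv> hinner D h f g"

lemma in_dom [simp, intro]:
  "u t \<in> dom" "ut t \<in> dom"
  "f \<in> dom \<Longrightarrow> L f \<in> dom" "f \<in> dom \<Longrightarrow> fmul \<psi> f \<in> dom" "f \<in> dom \<Longrightarrow> fsmul c f \<in> dom"
  "f \<in> dom \<Longrightarrow> g \<in> dom \<Longrightarrow> fadd f g \<in> dom"
  using u_dom dom_L dom_\<psi> dom_smul dom_add by auto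

lemma integrable_hinner_density_dom:
  assumes "f \<in> dom" "g \<in> dom"
  shows "integrable lborel (hinner_density D h f g)"
  using assms dom_L2 unfolding wL2_def
  by (intro integrable_hinner_density[OF set_borel_measurable_sqrt_det[OF D_open h_cont],
        of f "\<lambda>x. norm (f x)" g "\<lambda>x. norm (g x)"]) auto

lemma hinner_fadd_left_dom:
  "f \<in> dom \<Longrightarrow> g \<in> dom \<Longrightarrow> k \<in> dom \<Longrightarrow> \<langle>fadd f g, k\<rangle> = \<langle>f, k\<rangle> + \<langle>g, k\<rangle>"
  by (intro hinner_fadd_left integrable_hinner_density_dom)

lemma hinner_fadd_right_dom:
  "f \<in> dom \<Longrightarrow> g \<in> dom \<Longrightarrow> k \<in> dom \<Longrightarrow> \<langle>k, fadd f g\<rangle> = \<langle>k, f\<rangle> + \<langle>k, g\<rangle>"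
  by (intro hinner_fadd_right integrable_hinner_density_dom)

lemma hinner_comm_left:
  assumes "A (B f) \<in> dom" "B (A f) \<in> dom" "g \<in> dom"
  shows "\<langle>comm A B f, g\<rangle> = \<langle>A (B f), g\<rangle> - \<langle>B (A f), g\<rangle>"
  using assms by (simp add: comm_def hinner_fadd_left_dom hinner_fsmul_left)

lemma comm_L_fmul_dom [simp, intro]: "f \<in> dom \<Longrightarrow> comm L (fmul \<psi>) f \<in> dom"
  unfolding comm_def by auto

lemma Re_hinner_fmul_swap: "Re \<langle>fmul \<psi> f, g\<rangle> = Re \<langle>fmul \<psi> g, f\<rangle>"
  using hinner_commute[of D h "fmul \<psi> f" g] by (simp add: hinner_fmul)

lemma Re_hinner_L_fmul_diag:
  assumes "f \<in> dom"
  shows "Re \<langle>L (fmul \<psi> f), f\<rangle> = Re \<langle>fmul \<psi> (L f), f\<rangle>"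
  using assms L_symm by (simp add: Re_hinner_fmul_swap[of f])

lemma \<phi>_nonzero [simp]: "\<phi> t \<noteq> 0"
  using \<phi>_pos by (metis less_irrefl)

lemma H_ut_eq:
  assumes x: "x \<in> D"
  shows "H (ut t) x = cscale \<i> (cscale (\<phi> t) (utt t x) + cscale (\<phi>' t) (ut t x))"
proof (rule vec_eq_iff[THEN iffD2], rule allI)
  fix k
  have Hu_eq: "(\<lambda>s. H (u s) x $ k) = (\<lambda>s. \<i> * (complex_of_real (\<phi> s) * ut s x $ k))"
  proof
    fix s
    have "H (u s) x = cscale \<i> (\<phi> s *\<^sub>R ut s x)" using u_eq x by auto
    then show "H (u s) x $ k = \<i> * (complex_of_real (\<phi> s) * ut s x $ k)"
      by (simp add: cscale_def) (simp add: scaleR_conv_of_real)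
  qed
  have "((\<lambda>s. H (u s) x $ k) has_vector_derivative H (ut t) x $ k) (at t)"
    using Hu_deriv x unfolding tderiv_on_def
    by (intro bounded_linear.has_vector_derivative[OF bounded_linear_vec_nth]) auto
  moreover have "((\<lambda>s. ut s x $ k) has_vector_derivative utt t x $ k) (at t)"
    using ut_dec x unfolding decay_curve_def tderiv_on_def
    by (intro bounded_linear.has_vector_derivative[OF bounded_linear_vec_nth]) auto
  then have "((\<lambda>s. \<i> * (complex_of_real (\<phi> s) * ut s x $ k)) has_vector_derivative
      \<i> * (complex_of_real (\<phi> t) * utt t x $ k + complex_of_real (\<phi>' t) * ut t x $ k)) (at t)"
    using \<phi>_deriv
    by (intro has_vector_derivative_mult_right has_vector_derivative_mult has_vector_derivative_of_real) auto
  ultimately show "H (ut t) x $ k = cscale \<i> (cscale (\<phi> t) (utt t x) + cscale (\<phi>' t) (ut t x)) $ k"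
    unfolding Hu_eq by (simp add: cscale_def vector_derivative_unique_at)
qed

lemma L_u_eq:
  assumes x: "x \<in> D"
  shows "L (u t) x = cscale (- ((\<phi> t)\<^sup>2)) (utt t x) + cscale (- (\<phi> t * \<phi>' t)) (ut t x)"
proof -
  have "H (u t) y = fsmul (\<i> * \<phi> t) (ut t) y" if "y \<in> D" for y
  proof -
    have "H (u t) y = cscale \<i> (\<phi> t *\<^sub>R ut t y)" using u_eq that by auto
    then show ?thesis by (simp add: cscale_def fsmul_def vec_eq_iff) (simp add: scaleR_conv_of_real)
  qed
  then have "H (H (u t)) x = H (fsmul (\<i> * \<phi> t) (ut t)) x"
    using H_local x unfolding local_on_def by blast
  also have "\<dots> = fsmul (\<i> * \<phi> t) (H (ut t)) x"
    using H_smul x by auto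
  finally show ?thesis
    using H_sq x by (simp add: fsmul_def H_ut_eq[OF x] cscale_def vec_eq_iff algebra_simps power2_eq_square)
qed

lemma utt_eq:
  assumes x: "x \<in> D"
  shows "utt t x = fadd (fsmul (- 1 / (\<phi> t)\<^sup>2) (L (u t))) (fsmul (- \<phi>' t / \<phi> t) (ut t)) x"
  by (simp add: L_u_eq[OF x] fadd_def fsmul_def cscale_def vec_eq_iff field_simps power2_eq_square)

lemma Re_hinner_utt_right:
  assumes "f \<in> dom"
  shows "(\<phi> t)\<^sup>2 * Re \<langle>f, utt t\<rangle> = - Re \<langle>f, L (u t)\<rangle> - \<phi> t * \<phi>' t * Re \<langle>f, ut t\<rangle>"
proof -
  have "\<langle>f, utt t\<rangle> = \<langle>f, fadd (fsmul (- 1 / (\<phi> t)\<^sup>2) (L (u t))) (fsmul (- \<phi>' t / \<phi> t) (ut t))\<rangle>"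
    by (rule hinner_cong) (simp_all add: utt_eq)
  also have "\<dots> = of_real (- 1 / (\<phi> t)\<^sup>2) * \<langle>f, L (u t)\<rangle> + of_real (- \<phi>' t / \<phi> t) * \<langle>f, ut t\<rangle>"
    using assms by (simp add: hinner_fadd_right_dom hinner_fsmul_right)
  finally have "of_real ((\<phi> t)\<^sup>2) * \<langle>f, utt t\<rangle> = - \<langle>f, L (u t)\<rangle> - of_real (\<phi> t * \<phi>' t) * \<langle>f, ut t\<rangle>"
    by (simp add: field_simps power2_eq_square) (simp add: eq_neg_iff_add_eq_0 add_ac)
  from arg_cong[OF this, of Re] show ?thesis by simp
qed

definition energy :: "real \<Rightarrow> real" where
  "energy t = Re \<langle>fmul \<psi> (fsmul (\<phi> t) (ut t)), fsmul (\<phi> t) (ut t)\<rangle>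
    + Re \<langle>fadd (fsmul 2 (fmul \<psi> (L (u t)))) (fsmul (-1) (L (fmul \<psi> (u t)))), u t\<rangle>"

lemma energy_eq: "energy t = (\<phi> t)\<^sup>2 * Re \<langle>fmul \<psi> (ut t), ut t\<rangle> + Re \<langle>L (fmul \<psi> (u t)), u t\<rangle>"
proof -
  have "fmul \<psi> (fsmul (\<phi> t) (ut t)) = fsmul (\<phi> t) (fmul \<psi> (ut t))"
    by (auto simp: fmul_def fsmul_def cscale_def vec_eq_iff mult.left_commute)
  then have "\<langle>fmul \<psi> (fsmul (\<phi> t) (ut t)), fsmul (\<phi> t) (ut t)\<rangle> = of_real ((\<phi> t)\<^sup>2) * \<langle>fmul \<psi> (ut t), ut t\<rangle>"
    by (simp add: hinner_fsmul_left hinner_fsmul_right power2_eq_square)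
  moreover have "\<langle>fadd (fsmul 2 (fmul \<psi> (L (u t)))) (fsmul (-1) (L (fmul \<psi> (u t)))), u t\<rangle>
      = 2 * \<langle>fmul \<psi> (L (u t)), u t\<rangle> - \<langle>L (fmul \<psi> (u t)), u t\<rangle>"
    by (simp add: hinner_fadd_left_dom hinner_fsmul_left)
  ultimately show ?thesis
    unfolding energy_def using Re_hinner_L_fmul_diag[of "u t"] by simp
qed

lemma has_real_derivative_energy:
  "(energy has_real_derivative Re \<langle>L (fmul \<psi> (u t)), ut t\<rangle> - Re \<langle>fmul \<psi> (L (u t)), ut t\<rangle>) (at t)"
proof -
  note sqrt_det = set_borel_measurable_sqrt_det[OF D_open h_cont]
  have "((\<lambda>s. (\<phi> s)\<^sup>2) has_real_derivative 2 * \<phi> t * \<phi>' t) (at t)"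
    using DERIV_power[OF \<phi>_deriv[rule_format, of t], of 2] by (simp add: mult_ac)
  from DERIV_add[OF DERIV_mult[OF this has_real_derivative_Re_hinner[OF sqrt_det \<psi>ut_dec ut_dec]]
      has_real_derivative_Re_hinner[OF sqrt_det L\<psi>u_dec u_dec]]
  have "(energy has_real_derivative
      2 * \<phi> t * \<phi>' t * Re \<langle>fmul \<psi> (ut t), ut t\<rangle>
      + (\<phi> t)\<^sup>2 * (Re \<langle>fmul \<psi> (utt t), ut t\<rangle> + Re \<langle>fmul \<psi> (ut t), utt t\<rangle>)
      + (Re \<langle>L (fmul \<psi> (ut t)), u t\<rangle> + Re \<langle>L (fmul \<psi> (u t)), ut t\<rangle>)) (at t)"
    unfolding energy_eq[abs_def] by (simp add: mult.commute)
  moreover have "Re \<langle>fmul \<psi> (utt t), ut t\<rangle> = Re \<langle>fmul \<psi> (ut t), utt t\<rangle>"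
    by (rule Re_hinner_fmul_swap)
  moreover have "Re \<langle>L (fmul \<psi> (ut t)), u t\<rangle> = Re \<langle>fmul \<psi> (L (u t)), ut t\<rangle>"
    using L_symm Re_hinner_fmul_swap[of "ut t"] by simp
  moreover have "Re \<langle>fmul \<psi> (ut t), L (u t)\<rangle> = Re \<langle>fmul \<psi> (L (u t)), ut t\<rangle>"
    by (rule Re_hinner_fmul_swap)
  ultimately show ?thesis
    using Re_hinner_utt_right[of "fmul \<psi> (ut t)" t]
    by (elim DERIV_cong) (simp add: algebra_simps power2_eq_square)
qed

lemma energy_deriv_eq_commutator_pairing:
  "\<phi> t * (Re \<langle>L (fmul \<psi> (u t)), ut t\<rangle> - Re \<langle>fmul \<psi> (L (u t)), ut t\<rangle>)
    = Re \<langle>comm L (fmul \<psi>) (u t), fsmul (\<phi> t) (ut t)\<rangle>"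
proof -
  have "\<langle>comm L (fmul \<psi>) (u t), fsmul (\<phi> t) (ut t)\<rangle>
      = of_real (\<phi> t) * (\<langle>L (fmul \<psi> (u t)), ut t\<rangle> - \<langle>fmul \<psi> (L (u t)), ut t\<rangle>)"
    using hinner_comm_left[of L "fmul \<psi>" "u t" "ut t"] by (simp add: hinner_fsmul_right)
  then show ?thesis by simp
qed

lemma has_real_derivative_weighted_energy:
  "((\<lambda>s. \<phi> s * deriv energy s) has_real_derivative
     (Re \<langle>fmul \<psi> (L (u t)), L (u t)\<rangle> - Re \<langle>L (fmul \<psi> (u t)), L (u t)\<rangle>) / \<phi> t) (at t)"
proof -
  note sqrt_det = set_borel_measurable_sqrt_det[OF D_open h_cont]
  have "deriv energy = (\<lambda>s. Re \<langle>L (fmul \<psi> (u s)), ut s\<rangle> - Re \<langle>fmul \<psi> (L (u s)), ut s\<rangle>)"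
    by (intro ext DERIV_imp_deriv has_real_derivative_energy)
  with DERIV_mult[OF \<phi>_deriv[rule_format, of t] DERIV_diff[OF
      has_real_derivative_Re_hinner[OF sqrt_det L\<psi>u_dec ut_dec]
      has_real_derivative_Re_hinner[OF sqrt_det \<psi>Lu_dec ut_dec]]]
  have "((\<lambda>s. \<phi> s * deriv energy s) has_real_derivative
      \<phi>' t * (Re \<langle>L (fmul \<psi> (u t)), ut t\<rangle> - Re \<langle>fmul \<psi> (L (u t)), ut t\<rangle>)
      + \<phi> t * (Re \<langle>L (fmul \<psi> (ut t)), ut t\<rangle> + Re \<langle>L (fmul \<psi> (u t)), utt t\<rangle>
        - (Re \<langle>fmul \<psi> (L (ut t)), ut t\<rangle> + Re \<langle>fmul \<psi> (L (u t)), utt t\<rangle>))) (at t)"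
    by (simp add: mult.commute)
  moreover have "\<phi> t * (\<phi>' t * (Re \<langle>L (fmul \<psi> (u t)), ut t\<rangle> - Re \<langle>fmul \<psi> (L (u t)), ut t\<rangle>)
      + \<phi> t * (Re \<langle>L (fmul \<psi> (ut t)), ut t\<rangle> + Re \<langle>L (fmul \<psi> (u t)), utt t\<rangle>
        - (Re \<langle>fmul \<psi> (L (ut t)), ut t\<rangle> + Re \<langle>fmul \<psi> (L (u t)), utt t\<rangle>)))
    = Re \<langle>fmul \<psi> (L (u t)), L (u t)\<rangle> - Re \<langle>L (fmul \<psi> (u t)), L (u t)\<rangle>"
    using Re_hinner_L_fmul_diag[of "ut t"] Re_hinner_utt_right[of "L (fmul \<psi> (u t))" t]
      Re_hinner_utt_right[of "fmul \<psi> (L (u t))" t]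
    by (simp add: algebra_simps power2_eq_square)
  ultimately show ?thesis
    by (elim DERIV_cong) (simp add: field_simps)
qed

lemma double_commutator_pairing:
  "- (1/2) * \<langle>comm L (comm L (fmul \<psi>)) (u t), u t\<rangle>
    = of_real (Re \<langle>fmul \<psi> (L (u t)), L (u t)\<rangle> - Re \<langle>L (fmul \<psi> (u t)), L (u t)\<rangle>)"
proof -
  let ?W = "\<langle>L (fmul \<psi> (u t)), L (u t)\<rangle>" and ?Z = "\<langle>fmul \<psi> (L (u t)), L (u t)\<rangle>"
  have "\<langle>comm L (comm L (fmul \<psi>)) (u t), u t\<rangle>
      = \<langle>L (comm L (fmul \<psi>) (u t)), u t\<rangle> - \<langle>comm L (fmul \<psi>) (L (u t)), u t\<rangle>"
    by (rule hinner_comm_left) auto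
  also have "\<langle>L (comm L (fmul \<psi>) (u t)), u t\<rangle> = \<langle>comm L (fmul \<psi>) (u t), L (u t)\<rangle>"
    by (rule L_symm[rule_format]) auto
  also have "\<dots> = ?W - ?Z"
    by (rule hinner_comm_left) auto
  also have "\<langle>comm L (fmul \<psi>) (L (u t)), u t\<rangle>
      = \<langle>L (fmul \<psi> (L (u t))), u t\<rangle> - \<langle>fmul \<psi> (L (L (u t))), u t\<rangle>"
    by (rule hinner_comm_left) auto
  also have "\<langle>L (fmul \<psi> (L (u t))), u t\<rangle> = ?Z"
    by (rule L_symm[rule_format]) auto
  also have "\<langle>fmul \<psi> (L (L (u t))), u t\<rangle> = \<langle>L (u t), L (fmul \<psi> (u t))\<rangle>"
    unfolding hinner_fmul by (rule L_symm[rule_format]) auto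
  also have "\<dots> = cnj ?W"
    by (rule hinner_commute)
  finally have "\<langle>comm L (comm L (fmul \<psi>)) (u t), u t\<rangle> = ?W - 2 * ?Z + cnj ?W"
    by simp
  moreover have "?Z = cnj ?Z"
    by (rule trans[OF hinner_fmul hinner_commute])
  then have "Im ?Z = 0"
    by (metis cnj.sel(2) neg_equal_zero)
  ultimately show ?thesis
    by (simp add: complex_eq_iff field_simps)
qed

end

theorem proposition4p1:
  fixes D :: "(real^3) set"
    and h :: "real^3 \<Rightarrow> real^3^3"
    and \<phi> \<phi>' :: "real \<Rightarrow> real"
    and H L :: "sfield \<Rightarrow> sfield"
    and dom :: "sfield set"
    and \<psi> :: "real^3 \<Rightarrow> real"
    and u ut utt :: "real \<Rightarrow> sfield"
  assumes D_open: "open D"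
    and h_cont: "continuous_on D h"
    and h_metric: "\<forall>x\<in>D. transpose (h x) = h x \<and> (\<forall>\<xi>. \<xi> \<noteq> 0 \<longrightarrow> \<xi> \<bullet> (h x *v \<xi>) > 0)"
    and \<phi>_pos: "\<forall>t. \<phi> t > 0"
    and \<phi>_deriv: "\<forall>t. (\<phi> has_real_derivative \<phi>' t) (at t)"
    \<comment> \<open>the domain of smooth decaying fields, on which H^2 = L and L is symmetric\<close>
    and dom_L2: "\<forall>f\<in>dom. wL2 D h f"
    and dom_add: "\<forall>f\<in>dom. \<forall>g\<in>dom. fadd f g \<in> dom"
    and dom_smul: "\<forall>c. \<forall>f\<in>dom. fsmul c f \<in> dom"
    and dom_L: "\<forall>f\<in>dom. L f \<in> dom"
    and dom_H: "\<forall>f\<in>dom. H f \<in> dom"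
    and dom_\<psi>: "\<forall>f\<in>dom. fmul \<psi> f \<in> dom"
    and H_local: "local_on D H"
    and L_local: "local_on D L"
    and H_add: "\<forall>f\<in>dom. \<forall>g\<in>dom. \<forall>x\<in>D. H (fadd f g) x = fadd (H f) (H g) x"
    and H_smul: "\<forall>c. \<forall>f\<in>dom. \<forall>x\<in>D. H (fsmul c f) x = fsmul c (H f) x"
    and H_sq: "\<forall>f\<in>dom. \<forall>x\<in>D. H (H f) x = L f x"
    and L_symm: "\<forall>f\<in>dom. \<forall>g\<in>dom. hinner D h (L f) g = hinner D h f (L g)"
    \<comment> \<open>u is a sufficiently smooth and decaying solution of  i phi d_t u - H u = 0\<close>
    and u_dom: "\<forall>t. u t \<in> dom \<and> ut t \<in> dom"
    and u_eq: "\<forall>t. \<forall>x\<in>D. cscale \<i> (\<phi> t *\<^sub>R ut t x) = H (u t) x"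
    and u_dec: "decay_curve D h u ut"
    and ut_dec: "decay_curve D h ut utt"
    and \<psi>ut_dec: "decay_curve D h (\<lambda>t. fmul \<psi> (ut t)) (\<lambda>t. fmul \<psi> (utt t))"
    and \<psi>Lu_dec: "decay_curve D h (\<lambda>t. fmul \<psi> (L (u t))) (\<lambda>t. fmul \<psi> (L (ut t)))"
    and L\<psi>u_dec: "decay_curve D h (\<lambda>t. L (fmul \<psi> (u t))) (\<lambda>t. L (fmul \<psi> (ut t)))"
    and Hu_deriv: "tderiv_on D (\<lambda>t. H (u t)) (\<lambda>t. H (ut t))"
  defines "\<Theta> \<equiv> \<lambda>t.
      Re (hinner D h (fmul \<psi> (fsmul (complex_of_real (\<phi> t)) (ut t))) (fsmul (complex_of_real (\<phi> t)) (ut t)))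
    + Re (hinner D h (fadd (fsmul 2 (fmul \<psi> (L (u t)))) (fsmul (-1) (L (fmul \<psi> (u t))))) (u t))"
  shows "(\<forall>t. \<exists>d. (\<Theta> has_real_derivative d) (at t) \<and>
           \<phi> t * d = Re (hinner D h (comm L (fmul \<psi>) (u t)) (fsmul (complex_of_real (\<phi> t)) (ut t))))
       \<and> (\<forall>t. \<exists>d. ((\<lambda>s. \<phi> s * deriv \<Theta> s) has_real_derivative d) (at t) \<and>
           complex_of_real (\<phi> t * d) = - (1/2) * hinner D h (comm L (comm L (fmul \<psi>)) (u t)) (u t))"
proof -
  interpret dirac_evolution D h \<phi> \<phi>' H L dom \<psi> u ut utt
    using assms by unfold_locales blast+
  have \<Theta>_energy: "\<Theta> = energy"
    unfolding \<Theta>_def by (rule ext) (simp add: energy_def)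
  have "\<exists>d. (\<Theta> has_real_derivative d) (at t) \<and>
      \<phi> t * d = Re (hinner D h (comm L (fmul \<psi>) (u t)) (fsmul (complex_of_real (\<phi> t)) (ut t)))" for t
    unfolding \<Theta>_energy using has_real_derivative_energy energy_deriv_eq_commutator_pairing by blast
  moreover have "\<exists>d. ((\<lambda>s. \<phi> s * deriv \<Theta> s) has_real_derivative d) (at t) \<and>
      complex_of_real (\<phi> t * d) = - (1/2) * hinner D h (comm L (comm L (fmul \<psi>)) (u t)) (u t)" for t
    unfolding \<Theta>_energy double_commutator_pairing
    using has_real_derivative_weighted_energy by (auto intro!: exI simp del: of_real_mult of_real_diff)
  ultimately show ?thesis by blast
qed

end
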